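(* Fix an integer $L\ge 2$, parameters $w_1,w_2,\alpha>0$, $f_1,f_2\in\mathbb{R}$ with $|f_i|\le w_i$, and $\gamma\in\mathbb{R}$ with $|\gamma|\le\alpha$. For all $\rho_1,\rho_2\ge 0$, the product probability measure on $(\mathbb{N}_0^2)^{\mathbb{Z}_L}$ under which all $n^1_k,n^2_k$ ($k\in\mathbb{Z}_L$) are independent, with $n^1_k\sim\mathrm{Poisson}(\rho_1)$ and $n^2_k\sim\mathrm{Poisson}(\rho_2)$, i.e. $$\mu(\eta)=\prod_{k\in\mathbb{Z}_L}\frac{\rho_1^{n^1_k}e^{-\rho_1}}{n^1_k!}\,\frac{\rho_2^{n^2_k}e^{-\rho_2}}{n^2_k!},$$ is an invariant (stationary) measure of the two-lane lattice gas defined in the context. It is also translation invariant.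
   Context: Two-lane lattice gas on the discrete torus $\mathbb{Z}_L=\mathbb{Z}/L\mathbb{Z}$. A configuration is $\eta=(n^1_k,n^2_k)_{k\in\mathbb{Z}_L}\in(\mathbb{N}_0^2)^{\mathbb{Z}_L}$, where $n^i_k$ is the number of particles of lane $i\in\{1,2\}$ at site $k$. Parameters: $w_1,w_2,\alpha>0$, $f_1,f_2\in\mathbb{R}$ with $|f_i|\le w_i$, $\gamma\in\mathbb{R}$ with $|\gamma|\le\alpha$. Set $r_i=\tfrac12(w_i+f_i)$, $\ell_i=\tfrac12(w_i-f_i)$, $g^\pm=\tfrac12(\alpha\pm\gamma)$ (all nonnegative), and $\bar n^i_k=\tfrac12(n^i_k+n^i_{k+1})$. The process is the continuous-time Markov chain in which, for each $k\in\mathbb{Z}_L$: one lane-1 particle moves from $k$ to $k+1$ at rate $n^1_k\,(r_1+g^+\bar n^2_k)$; one lane-1 particle moves from $k+1$ to $k$ at rate $n^1_{k+1}\,(\ell_1+g^-\bar n^2_k)$; one lane-2 particle moves from $k$ to $k+1$ at rate $n^2_k\,(r_2+g^+\bar n^1_k)$; one lane-2 particle moves from $k+1$ to $k$ at rate $n^2_{k+1}\,(\ell_2+g^-\bar n^1_k)$. (Thus each particle jumps independently of the other particles of its own lane, with rates depending on the occupation of the other lane on the same pair of sites.) A measure is invariant if it is stationary under this dynamics. *)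

theory Defs
  imports "HOL-Analysis.Analysis"
begin

text \<open>Configurations on the torus Z_L = {0..<L}: eta i k = n^i_k for lane i in {1,2},
  site k < L; all other values are 0 (normal form).\<close>

type_synonym config = "nat \<Rightarrow> nat \<Rightarrow> nat"

definition configs :: "nat \<Rightarrow> config set" where
  "configs L = {\<eta>. \<forall>i k. (i \<notin> {1,2} \<or> k \<ge> L) \<longrightarrow> \<eta> i k = 0}"

definition succ_site :: "nat \<Rightarrow> nat \<Rightarrow> nat" where
  "succ_site L k = (k + 1) mod L"

definition other_lane :: "nat \<Rightarrow> nat" where
  "other_lane i = 3 - i"

definition nbar :: "nat \<Rightarrow> config \<Rightarrow> nat \<Rightarrow> nat \<Rightarrow> real" where
  "nbar L \<eta> j k = (real (\<eta> j k) + real (\<eta> j (succ_site L k))) / 2"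

definition move :: "config \<Rightarrow> nat \<Rightarrow> nat \<Rightarrow> nat \<Rightarrow> config" where
  "move \<eta> i a b = \<eta>(i := (\<eta> i)(a := \<eta> i a - 1, b := \<eta> i b + 1))"

text \<open>Elementary transitions are indexed by (i, k, d): lane i, bond (k, k+1),
  direction d (True = right, k -> k+1; False = left, k+1 -> k).\<close>
definition trans_idx :: "nat \<Rightarrow> (nat \<times> nat \<times> bool) set" where
  "trans_idx L = {1,2} \<times> {0..<L} \<times> UNIV"

definition jump :: "nat \<Rightarrow> config \<Rightarrow> nat \<times> nat \<times> bool \<Rightarrow> config" where
  "jump L \<eta> t = (case t of (i, k, d) \<Rightarrow>
     if d then move \<eta> i k (succ_site L k) else move \<eta> i (succ_site L k) k)"

definition jrate :: "nat \<Rightarrow> (nat \<Rightarrow> real) \<Rightarrow> (nat \<Rightarrow> real) \<Rightarrow> real \<Rightarrow> real \<Rightarrow>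
                     config \<Rightarrow> nat \<times> nat \<times> bool \<Rightarrow> real" where
  "jrate L w f \<alpha> \<gamma> \<eta> t = (case t of (i, k, d) \<Rightarrow>
     if d then real (\<eta> i k) * ((w i + f i) / 2 + (\<alpha> + \<gamma>) / 2 * nbar L \<eta> (other_lane i) k)
     else real (\<eta> i (succ_site L k)) * ((w i - f i) / 2 + (\<alpha> - \<gamma>) / 2 * nbar L \<eta> (other_lane i) k))"

definition qrate :: "nat \<Rightarrow> (nat \<Rightarrow> real) \<Rightarrow> (nat \<Rightarrow> real) \<Rightarrow> real \<Rightarrow> real \<Rightarrow>
                     config \<Rightarrow> config \<Rightarrow> real" where
  "qrate L w f \<alpha> \<gamma> \<eta> \<eta>' =
     (\<Sum>t\<in>trans_idx L. if jump L \<eta> t = \<eta>' then jrate L w f \<alpha> \<gamma> \<eta> t else 0)"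

text \<open>Stationarity (global balance, \<mu> Q = 0) of a measure \<mu> on the countable state space S.\<close>
definition stationary :: "('s \<Rightarrow> real) \<Rightarrow> ('s \<Rightarrow> 's \<Rightarrow> real) \<Rightarrow> 's set \<Rightarrow> bool" where
  "stationary \<mu> q S \<longleftrightarrow>
     (\<forall>\<eta>\<in>S. (\<Sum>\<^sub>\<infinity>\<eta>'\<in>S - {\<eta>}. \<mu> \<eta>' * q \<eta>' \<eta>) = \<mu> \<eta> * (\<Sum>\<^sub>\<infinity>\<eta>'\<in>S - {\<eta>}. q \<eta> \<eta>'))"

definition poisson_prod :: "nat \<Rightarrow> (nat \<Rightarrow> real) \<Rightarrow> config \<Rightarrow> real" where
  "poisson_prod L \<rho> \<eta> =
     (\<Prod>k\<in>{0..<L}. \<Prod>i\<in>{1,2}. \<rho> i ^ \<eta> i k * exp (- \<rho> i) / fact (\<eta> i k))"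

definition shift :: "nat \<Rightarrow> config \<Rightarrow> config" where
  "shift L \<eta> = (\<lambda>i k. if k < L then \<eta> i (succ_site L k) else 0)"

end

theory Submission
  imports Defs
begin

(* Each elementary transition t enters a configuration \<eta> from at most one configuration,
   reverse_jump L \<eta> t, and the Poisson weights turn the inflow through t into \<mu> \<eta> times the
   forward rate of t with the occupation of its departure site replaced by that of its arrival site.
   On each bond these reversed rates exceed the forward ones by the discrete gradient of
   G k = f 1 * n\<^sub>1 k + f 2 * n\<^sub>2 k + \<gamma> * n\<^sub>1 k * n\<^sub>2 k, which sums to zero around the torus,
   so the total inflow equals the outflow \<mu> \<eta> * (\<Sum>t. jrate \<eta> t).
   Translation invariance is a reindexing of the product. *)

lemma infsum_jump_rates:
  fixes r :: "'s \<Rightarrow> 't \<Rightarrow> real"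
  assumes "finite T" and "\<And>t. t \<in> T \<Longrightarrow> jmp \<eta> t \<in> S - {\<eta>}"
  shows "(\<Sum>\<^sub>\<infinity>\<eta>'\<in>S - {\<eta>}. \<Sum>t\<in>T. if jmp \<eta> t = \<eta>' then r \<eta> t else 0) = (\<Sum>t\<in>T. r \<eta> t)"
proof -
  have "(\<Sum>\<^sub>\<infinity>\<eta>'\<in>S - {\<eta>}. \<Sum>t\<in>T. if jmp \<eta> t = \<eta>' then r \<eta> t else 0)
      = (\<Sum>\<eta>'\<in>jmp \<eta> ` T. \<Sum>t\<in>T. if jmp \<eta> t = \<eta>' then r \<eta> t else 0)"
    by (subst infsum_cong_neutral[where T = "jmp \<eta> ` T"]) (use assms in \<open>auto intro!: sum.neutral\<close>)
  also have "\<dots> = (\<Sum>t\<in>T. r \<eta> t)"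
    by (subst sum.swap) (simp add: assms(1))
  finally show ?thesis .
qed

lemma infsum_inflow_rates:
  fixes \<mu> :: "'s \<Rightarrow> real" and r :: "'s \<Rightarrow> 't \<Rightarrow> real"
  assumes "finite T" and "\<And>t. t \<in> T \<Longrightarrow> pre t \<in> S - {\<eta>}"
    and "\<And>t \<eta>'. t \<in> T \<Longrightarrow> jmp \<eta>' t = \<eta> \<Longrightarrow> r \<eta>' t \<noteq> 0 \<Longrightarrow> \<eta>' = pre t"
  shows "(\<Sum>\<^sub>\<infinity>\<eta>'\<in>S - {\<eta>}. \<mu> \<eta>' * (\<Sum>t\<in>T. if jmp \<eta>' t = \<eta> then r \<eta>' t else 0))
       = (\<Sum>t\<in>T. if jmp (pre t) t = \<eta> then \<mu> (pre t) * r (pre t) t else 0)"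
proof -
  have "(\<Sum>\<^sub>\<infinity>\<eta>'\<in>S - {\<eta>}. \<mu> \<eta>' * (\<Sum>t\<in>T. if jmp \<eta>' t = \<eta> then r \<eta>' t else 0))
      = (\<Sum>\<^sub>\<infinity>\<eta>'\<in>pre ` T. \<mu> \<eta>' * (\<Sum>t\<in>T. if jmp \<eta>' t = \<eta> then r \<eta>' t else 0))"
  proof (rule infsum_cong_neutral)
    fix \<eta>' assume "\<eta>' \<in> S - {\<eta>} - pre ` T"
    then have "(if jmp \<eta>' t = \<eta> then r \<eta>' t else 0) = 0" if "t \<in> T" for t
      using assms(3)[OF that] that by auto
    then show "\<mu> \<eta>' * (\<Sum>t\<in>T. if jmp \<eta>' t = \<eta> then r \<eta>' t else 0) = 0" by simp
  qed (use assms(2) in auto)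
  also have "\<dots> = (\<Sum>\<eta>'\<in>pre ` T. \<Sum>t\<in>T. if jmp \<eta>' t = \<eta> then \<mu> \<eta>' * r \<eta>' t else 0)"
    using assms(1) by (auto simp: sum_distrib_left intro!: sum.cong)
  also have "\<dots> = (\<Sum>t\<in>T. \<Sum>\<eta>'\<in>pre ` T. if jmp \<eta>' t = \<eta> then \<mu> \<eta>' * r \<eta>' t else 0)"
    by (rule sum.swap)
  also have "\<dots> = (\<Sum>t\<in>T. if jmp (pre t) t = \<eta> then \<mu> (pre t) * r (pre t) t else 0)"
  proof (rule sum.cong[OF refl])
    fix t assume "t \<in> T"
    then show "(\<Sum>\<eta>'\<in>pre ` T. if jmp \<eta>' t = \<eta> then \<mu> \<eta>' * r \<eta>' t else 0)
        = (if jmp (pre t) t = \<eta> then \<mu> (pre t) * r (pre t) t else 0)"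
      using assms(1,3) by (subst sum.remove[of _ "pre t"]) (auto intro!: sum.neutral split: if_splits)
  qed
  finally show ?thesis .
qed

lemma stationary_by_reverse_transitions:
  fixes \<mu> :: "'s \<Rightarrow> real" and r :: "'s \<Rightarrow> 't \<Rightarrow> real"
  assumes "finite T"
    and "\<And>\<eta> t. \<eta> \<in> S \<Longrightarrow> t \<in> T \<Longrightarrow> jmp \<eta> t \<in> S - {\<eta>}"
    and "\<And>\<eta> t. \<eta> \<in> S \<Longrightarrow> t \<in> T \<Longrightarrow> pre \<eta> t \<in> S - {\<eta>}"
    and "\<And>\<eta> \<eta>' t. \<eta> \<in> S \<Longrightarrow> t \<in> T \<Longrightarrow> jmp \<eta>' t = \<eta> \<Longrightarrow> r \<eta>' t \<noteq> 0 \<Longrightarrow> \<eta>' = pre \<eta> t"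
    and "\<And>\<eta>. \<eta> \<in> S \<Longrightarrow>
      (\<Sum>t\<in>T. if jmp (pre \<eta> t) t = \<eta> then \<mu> (pre \<eta> t) * r (pre \<eta> t) t else 0) = \<mu> \<eta> * (\<Sum>t\<in>T. r \<eta> t)"
  shows "stationary \<mu> (\<lambda>\<eta> \<eta>'. \<Sum>t\<in>T. if jmp \<eta> t = \<eta>' then r \<eta> t else 0) S"
  unfolding stationary_def
proof
  fix \<eta> assume "\<eta> \<in> S"
  have "(\<Sum>\<^sub>\<infinity>\<eta>'\<in>S - {\<eta>}. \<mu> \<eta>' * (\<Sum>t\<in>T. if jmp \<eta>' t = \<eta> then r \<eta>' t else 0))
      = (\<Sum>t\<in>T. if jmp (pre \<eta> t) t = \<eta> then \<mu> (pre \<eta> t) * r (pre \<eta> t) t else 0)"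
    by (rule infsum_inflow_rates) (use assms \<open>\<eta> \<in> S\<close> in auto)
  also have "\<dots> = \<mu> \<eta> * (\<Sum>t\<in>T. r \<eta> t)"
    using assms(5) \<open>\<eta> \<in> S\<close> .
  also have "(\<Sum>t\<in>T. r \<eta> t) = (\<Sum>\<^sub>\<infinity>\<eta>'\<in>S - {\<eta>}. \<Sum>t\<in>T. if jmp \<eta> t = \<eta>' then r \<eta> t else 0)"
    by (rule infsum_jump_rates[symmetric]) (use assms \<open>\<eta> \<in> S\<close> in auto)
  finally show "(\<Sum>\<^sub>\<infinity>\<eta>'\<in>S - {\<eta>}. \<mu> \<eta>' * (\<Sum>t\<in>T. if jmp \<eta>' t = \<eta> then r \<eta>' t else 0))
      = \<mu> \<eta> * (\<Sum>\<^sub>\<infinity>\<eta>'\<in>S - {\<eta>}. \<Sum>t\<in>T. if jmp \<eta> t = \<eta>' then r \<eta> t else 0)" .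
qed

lemma succ_site_eq: "k < L \<Longrightarrow> succ_site L k = (if k + 1 = L then 0 else k + 1)"
  by (simp add: succ_site_def)

lemma succ_site_less: "0 < L \<Longrightarrow> succ_site L k < L"
  by (simp add: succ_site_def)

lemma succ_site_neq: "2 \<le> L \<Longrightarrow> k < L \<Longrightarrow> succ_site L k \<noteq> k"
  by (simp add: succ_site_eq)

lemma bij_betw_succ_site: "0 < L \<Longrightarrow> bij_betw (succ_site L) {0..<L} {0..<L}"
proof -
  assume "0 < L"
  moreover have "inj_on (succ_site L) {0..<L}"
    by (auto intro!: inj_onI simp: succ_site_eq split: if_splits)
  ultimately show ?thesis
    by (simp add: bij_betw_def endo_inj_surj image_subset_iff succ_site_less)
qed

lemma sum_succ_site: "0 < L \<Longrightarrow> (\<Sum>k\<in>{0..<L}. g (succ_site L k)) = (\<Sum>k\<in>{0..<L}. g k)"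
  using sum.reindex_bij_betw[OF bij_betw_succ_site] by blast

lemma prod_succ_site: "0 < L \<Longrightarrow> (\<Prod>k\<in>{0..<L}. g (succ_site L k)) = (\<Prod>k\<in>{0..<L}. g k)"
  using prod.reindex_bij_betw[OF bij_betw_succ_site] by blast

definition poisson_weight :: "real \<Rightarrow> nat \<Rightarrow> real" where
  "poisson_weight r n = r ^ n * exp (- r) / fact n"

definition lane_weight :: "nat \<Rightarrow> real \<Rightarrow> (nat \<Rightarrow> nat) \<Rightarrow> real" where
  "lane_weight L r x = (\<Prod>k\<in>{0..<L}. poisson_weight r (x k))"

lemma poisson_prod_lanes:
  "poisson_prod L \<rho> \<eta> = lane_weight L (\<rho> 1) (\<eta> 1) * lane_weight L (\<rho> 2) (\<eta> 2)"
  unfolding poisson_prod_def lane_weight_def poisson_weight_def prod.distrib[symmetric]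
  by (rule prod.cong) simp_all

lemma poisson_weight_Suc: "poisson_weight r (Suc n) * real (Suc n) = r * poisson_weight r n"
  by (simp add: poisson_weight_def field_simps del: of_nat_Suc)

lemma lane_weight_two_sites:
  assumes "a < L" "b < L" "a \<noteq> b"
  shows "lane_weight L r x = poisson_weight r (x a) * poisson_weight r (x b) *
    (\<Prod>k\<in>{0..<L} - {a, b}. poisson_weight r (x k))"
  using assms unfolding lane_weight_def
  by (simp add: prod.remove[of "{0..<L}" a] prod.remove[of "{0..<L} - {a}" b] insert_commute
      flip: Diff_insert)

lemma lane_weight_transfer:
  assumes "a < L" "b < L" "a \<noteq> b" "1 \<le> x a"
  shows "lane_weight L r (x(a := x a - 1, b := x b + 1)) * real (x b + 1) = lane_weight L r x * real (x a)"
proof -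
  obtain p where p: "x a = Suc p" using assms(4) by (cases "x a") auto
  define R where "R = (\<Prod>k\<in>{0..<L} - {a, b}. poisson_weight r (x k))"
  have "lane_weight L r (x(a := x a - 1, b := x b + 1)) = poisson_weight r p * poisson_weight r (Suc (x b)) * R"
    using assms by (simp add: lane_weight_two_sites p R_def)
  moreover have "lane_weight L r x = poisson_weight r (Suc p) * poisson_weight r (x b) * R"
    using assms by (simp add: lane_weight_two_sites p R_def)
  ultimately show ?thesis
    using poisson_weight_Suc[of r p] poisson_weight_Suc[of r "x b"] unfolding p
    by (simp only: Suc_eq_plus1 [symmetric]) (simp add: algebra_simps del: of_nat_Suc)
qed

lemma move_in_configs: "\<eta> \<in> configs L \<Longrightarrow> i \<in> {1, 2} \<Longrightarrow> a < L \<Longrightarrow> b < L \<Longrightarrow> move \<eta> i a b \<in> configs L"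
  unfolding configs_def move_def by auto

lemma move_neq: "a \<noteq> b \<Longrightarrow> move \<eta> i a b \<noteq> \<eta>"
  by (auto simp: move_def fun_eq_iff)

lemma move_move_cancel: "a \<noteq> b \<Longrightarrow> 1 \<le> \<eta> i b \<Longrightarrow> move (move \<eta> i b a) i a b = \<eta>"
  by (auto simp: move_def fun_eq_iff)

lemma nbar_other_lane_move: "i \<in> {1, 2} \<Longrightarrow> nbar L (move \<eta> i a b) (other_lane i) k = nbar L \<eta> (other_lane i) k"
  by (auto simp: nbar_def move_def other_lane_def)

lemma poisson_prod_lane:
  "i \<in> {1, 2} \<Longrightarrow> poisson_prod L \<rho> \<eta> = lane_weight L (\<rho> i) (\<eta> i) * lane_weight L (\<rho> (other_lane i)) (\<eta> (other_lane i))"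
  by (auto simp: poisson_prod_lanes other_lane_def)

lemma poisson_prod_move:
  assumes "i \<in> {1, 2}" "a < L" "b < L" "a \<noteq> b" "1 \<le> \<eta> i a"
  shows "poisson_prod L \<rho> (move \<eta> i a b) * real (\<eta> i b + 1) = poisson_prod L \<rho> \<eta> * real (\<eta> i a)"
proof -
  have "other_lane i \<noteq> i"
    using assms(1) by (auto simp: other_lane_def)
  then have "poisson_prod L \<rho> (move \<eta> i a b) * real (\<eta> i b + 1)
      = lane_weight L (\<rho> i) ((\<eta> i)(a := \<eta> i a - 1, b := \<eta> i b + 1)) * real (\<eta> i b + 1)
        * lane_weight L (\<rho> (other_lane i)) (\<eta> (other_lane i))"
    using poisson_prod_lane[OF assms(1)] by (simp add: move_def)
  also have "\<dots> = poisson_prod L \<rho> \<eta> * real (\<eta> i a)"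
    using poisson_prod_lane[OF assms(1)] lane_weight_transfer[where x = "\<eta> i" and r = "\<rho> i", OF assms(2-5)]
    by simp
  finally show ?thesis .
qed

(* If there is no particle at b, the move from b to a is the identity (by truncated
   subtraction) and not undone by a move from a to b; both sides are then 0. *)
lemma poisson_prod_reverse_move:
  assumes "i \<in> {1, 2}" "a < L" "b < L" "a \<noteq> b"
  shows "(if move (move \<eta> i b a) i a b = \<eta>
          then poisson_prod L \<rho> (move \<eta> i b a) * (real (move \<eta> i b a i a) * c) else 0)
       = poisson_prod L \<rho> \<eta> * (real (\<eta> i b) * c)"
proof (cases "1 \<le> \<eta> i b")
  case True
  then show ?thesis
    using assms poisson_prod_move[where a = b and b = a and \<eta> = \<eta> and i = i, OF assms(1,3,2) _ True]
    by (simp add: move_move_cancel move_def mult.assoc [symmetric] del: of_nat_Suc)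
next
  case False
  then have "move (move \<eta> i b a) i a b i b \<noteq> \<eta> i b"
    using assms(4) by (simp add: move_def)
  then show ?thesis
    using False by auto
qed

definition reverse_jump :: "nat \<Rightarrow> config \<Rightarrow> nat \<times> nat \<times> bool \<Rightarrow> config" where
  "reverse_jump L \<eta> t = (case t of (i, k, d) \<Rightarrow>
     if d then move \<eta> i (succ_site L k) k else move \<eta> i k (succ_site L k))"

definition reverse_rate :: "nat \<Rightarrow> (nat \<Rightarrow> real) \<Rightarrow> (nat \<Rightarrow> real) \<Rightarrow> real \<Rightarrow> real \<Rightarrow>
                            config \<Rightarrow> nat \<times> nat \<times> bool \<Rightarrow> real" where
  "reverse_rate L w f \<alpha> \<gamma> \<eta> t = (case t of (i, k, d) \<Rightarrow>
     if d then real (\<eta> i (succ_site L k)) * ((w i + f i) / 2 + (\<alpha> + \<gamma>) / 2 * nbar L \<eta> (other_lane i) k)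
     else real (\<eta> i k) * ((w i - f i) / 2 + (\<alpha> - \<gamma>) / 2 * nbar L \<eta> (other_lane i) k))"

lemma finite_trans_idx: "finite (trans_idx L)"
  by (simp add: trans_idx_def)

lemma trans_idxE:
  assumes "2 \<le> L" "t \<in> trans_idx L"
  obtains i k d where "t = (i, k, d)" "i \<in> {1, 2}" "k < L" "succ_site L k < L" "succ_site L k \<noteq> k"
  using assms by (auto simp: trans_idx_def succ_site_less succ_site_neq)

lemma jump_in_configs:
  assumes "2 \<le> L" "\<eta> \<in> configs L" "t \<in> trans_idx L"
  shows "jump L \<eta> t \<in> configs L - {\<eta>}"
  using assms(1,3) by (rule trans_idxE) (use assms(2) in \<open>auto simp: jump_def move_in_configs move_neq\<close>)

lemma reverse_jump_in_configs:
  assumes "2 \<le> L" "\<eta> \<in> configs L" "t \<in> trans_idx L"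
  shows "reverse_jump L \<eta> t \<in> configs L - {\<eta>}"
  using assms(1,3) by (rule trans_idxE) (use assms(2) in \<open>auto simp: reverse_jump_def move_in_configs move_neq\<close>)

lemma jump_eq_imp_reverse_jump:
  assumes "2 \<le> L" "t \<in> trans_idx L" "jump L \<eta>' t = \<eta>" "jrate L w f \<alpha> \<gamma> \<eta>' t \<noteq> 0"
  shows "\<eta>' = reverse_jump L \<eta> t"
  using assms(1,2) by (rule trans_idxE)
    (use assms(3,4) in \<open>auto simp: jump_def reverse_jump_def jrate_def move_move_cancel split: if_splits\<close>)

lemma poisson_prod_reverse_jump:
  assumes "2 \<le> L" "t \<in> trans_idx L"
  shows "(if jump L (reverse_jump L \<eta> t) t = \<eta>
          then poisson_prod L \<rho> (reverse_jump L \<eta> t) * jrate L w f \<alpha> \<gamma> (reverse_jump L \<eta> t) t else 0)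
       = poisson_prod L \<rho> \<eta> * reverse_rate L w f \<alpha> \<gamma> \<eta> t"
  using assms
proof (rule trans_idxE)
  fix i k d
  assume t: "t = (i, k, d)" and i: "i \<in> {1, 2}"
    and sites: "k < L" "succ_site L k < L" "succ_site L k \<noteq> k"
  show ?thesis
  proof (cases d)
    case True
    then show ?thesis
      unfolding t jump_def reverse_jump_def jrate_def reverse_rate_def
      by (simp only: prod.case if_True nbar_other_lane_move[OF i])
        (rule poisson_prod_reverse_move[OF i sites(1,2) sites(3)[symmetric]])
  next
    case False
    then show ?thesis
      unfolding t jump_def reverse_jump_def jrate_def reverse_rate_def
      by (simp only: prod.case if_False nbar_other_lane_move[OF i])
        (rule poisson_prod_reverse_move[OF i sites(2,1) sites(3)])
  qed
qed

lemma sum_trans_idx: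
  "(\<Sum>t\<in>trans_idx L. h t) = (\<Sum>k\<in>{0..<L}. h (1, k, True) + h (1, k, False) + h (2, k, True) + h (2, k, False))"
  unfolding trans_idx_def sum.cartesian_product' UNIV_bool by (simp add: sum.distrib ac_simps)

lemma sum_reverse_rate:
  assumes "0 < L"
  shows "(\<Sum>t\<in>trans_idx L. reverse_rate L w f \<alpha> \<gamma> \<eta> t) = (\<Sum>t\<in>trans_idx L. jrate L w f \<alpha> \<gamma> \<eta> t)"
proof -
  define G where "G k = f 1 * real (\<eta> 1 k) + f 2 * real (\<eta> 2 k) + \<gamma> * real (\<eta> 1 k) * real (\<eta> 2 k)" for k
  define bond where "bond r k = r (1, k, True) + r (1, k, False) + r (2, k, True) + r (2, k, False)"
    for r :: "nat \<times> nat \<times> bool \<Rightarrow> real" and k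
  have "bond (reverse_rate L w f \<alpha> \<gamma> \<eta>) k = bond (jrate L w f \<alpha> \<gamma> \<eta>) k + (G (succ_site L k) - G k)" for k
    unfolding bond_def reverse_rate_def jrate_def G_def nbar_def other_lane_def by (simp add: field_simps)
  then have "(\<Sum>k\<in>{0..<L}. bond (reverse_rate L w f \<alpha> \<gamma> \<eta>) k)
      = (\<Sum>k\<in>{0..<L}. bond (jrate L w f \<alpha> \<gamma> \<eta>) k) + ((\<Sum>k\<in>{0..<L}. G (succ_site L k)) - (\<Sum>k\<in>{0..<L}. G k))"
    by (simp add: sum.distrib sum_subtractf)
  then show ?thesis
    using sum_succ_site[OF assms, of G] by (simp add: sum_trans_idx bond_def)
qed

lemma poisson_prod_shift: "0 < L \<Longrightarrow> poisson_prod L \<rho> (shift L \<eta>) = poisson_prod L \<rho> \<eta>"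
  unfolding poisson_prod_def shift_def
  using prod_succ_site[of L "\<lambda>k. \<Prod>i\<in>{1,2}. \<rho> i ^ \<eta> i k * exp (- \<rho> i) / fact (\<eta> i k)"]
  by simp

theorem proposition2:
  fixes L :: nat and w f \<rho> :: "nat \<Rightarrow> real" and \<alpha> \<gamma> :: real
  assumes "L \<ge> 2"
    and "w 1 > 0" and "w 2 > 0" and "\<alpha> > 0"
    and "\<bar>f 1\<bar> \<le> w 1" and "\<bar>f 2\<bar> \<le> w 2" and "\<bar>\<gamma>\<bar> \<le> \<alpha>"
    and "\<rho> 1 \<ge> 0" and "\<rho> 2 \<ge> 0"
  shows "stationary (poisson_prod L \<rho>) (qrate L w f \<alpha> \<gamma>) (configs L)
     \<and> (\<forall>\<eta>\<in>configs L. poisson_prod L \<rho> (shift L \<eta>) = poisson_prod L \<rho> \<eta>)"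
proof
  have balance: "(\<Sum>t\<in>trans_idx L. if jump L (reverse_jump L \<eta> t) t = \<eta>
      then poisson_prod L \<rho> (reverse_jump L \<eta> t) * jrate L w f \<alpha> \<gamma> (reverse_jump L \<eta> t) t else 0)
    = poisson_prod L \<rho> \<eta> * (\<Sum>t\<in>trans_idx L. jrate L w f \<alpha> \<gamma> \<eta> t)" for \<eta>
    using assms(1) by (simp add: poisson_prod_reverse_jump sum_reverse_rate flip: sum_distrib_left)
  show "stationary (poisson_prod L \<rho>) (qrate L w f \<alpha> \<gamma>) (configs L)"
    unfolding qrate_def [abs_def]
    by (rule stationary_by_reverse_transitions[where pre = "reverse_jump L"])
      (use assms(1) in \<open>simp_all add: finite_trans_idx jump_in_configs reverse_jump_in_configs
        jump_eq_imp_reverse_jump balance del: Diff_iff\<close>)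
  show "\<forall>\<eta>\<in>configs L. poisson_prod L \<rho> (shift L \<eta>) = poisson_prod L \<rho> \<eta>"
    using assms(1) by (simp add: poisson_prod_shift)
qed

end
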